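(* Let $\mathcal{K}\subseteq\mathbb{R}^n$ be a proper convex cone with a $\nu$-LHSCB $f$, and let $A\in\mathbb{R}^{m\times n}$ (full row rank), $\mathbf{b}\in\mathbb{R}^m$, $\mathbf{c}\in\mathbb{R}^n$. Let $\eta>0$, $\tau>0$, $(\mathbf{x},\mathbf{y},\mathbf{s})\in\mathcal{N}(\eta,\tau)$, let $(\Delta\mathbf{x},\Delta\mathbf{y},\Delta\mathbf{s})$ be the solution of the Newton system at $(\mathbf{x},\mathbf{y},\mathbf{s})$ with parameter $\tau$, and let $\mathbf{x}^+=\mathbf{x}+\Delta\mathbf{x}$, $\mathbf{s}^+=\mathbf{s}+\Delta\mathbf{s}$. Then \[\tau(\nu-\eta^2)\le(\mathbf{x}^+)^\top\mathbf{s}^+\le\tau\nu.\]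
   Context: $\mathcal{K}\subseteq\mathbb{R}^n$ is a proper (closed, convex, pointed, full-dimensional) cone with interior $\mathcal{K}^\circ$ and dual cone $\mathcal{K}^*=\{\mathbf{s}:\mathbf{s}^\top\mathbf{x}\ge 0\ \forall \mathbf{x}\in\mathcal{K}\}$. A $\nu$-LHSCB for $\mathcal{K}$ is a strictly convex, three times differentiable $f:\mathcal{K}^\circ\to\mathbb{R}$ with $f(\mathbf{x})\to\infty$ as $\mathbf{x}$ approaches the boundary of $\mathcal{K}$, $|D^3f(\mathbf{x})[\mathbf{h},\mathbf{h},\mathbf{h}]|\le 2\,(D^2f(\mathbf{x})[\mathbf{h},\mathbf{h}])^{3/2}$, $\nu=\sup_{\mathbf{x}\in\mathcal{K}^\circ}g(\mathbf{x})^\top H(\mathbf{x})^{-1}g(\mathbf{x})<\infty$, and $f(t\mathbf{x})=f(\mathbf{x})-\nu\ln t$ for $t>0$; $g,H$ are the gradient and Hessian of $f$. Local norms: $\|\mathbf{v}\|_{\mathbf{x}}=\sqrt{\mathbf{v}^\top H(\mathbf{x})\mathbf{v}}$, $\|\mathbf{v}\|^*_{\mathbf{x}}=\sqrt{\mathbf{v}^\top H(\mathbf{x})^{-1}\mathbf{v}}$. $\mathcal{F}^\circ=\{(\mathbf{x},\mathbf{y},\mathbf{s})\in\mathcal{K}^\circ\times\mathbb{R}^m\times(\mathcal{K}^* )^\circ: A\mathbf{x}=\mathbf{b},\ A^\top\mathbf{y}+\mathbf{s}=\mathbf{c}\}$ (strictly feasible solutions of the pair $\inf\{\mathbf{c}^\top\mathbf{x}:A\mathbf{x}=\mathbf{b},\mathbf{x}\in\mathcal{K}\}$,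 $\sup\{\mathbf{b}^\top\mathbf{y}:A^\top\mathbf{y}+\mathbf{s}=\mathbf{c},\mathbf{s}\in\mathcal{K}^*\}$). $\mathcal{N}(\eta,\tau)=\{(\mathbf{x},\mathbf{y},\mathbf{s})\in\mathcal{F}^\circ:\|\mathbf{s}+\tau g(\mathbf{x})\|^*_{\mathbf{x}}\le\eta\tau\}$. The Newton system at $(\mathbf{x},\mathbf{y},\mathbf{s})$ with parameter $\tau$ is: $A\Delta\mathbf{x}=\mathbf{0}$, $A^\top\Delta\mathbf{y}+\Delta\mathbf{s}=\mathbf{0}$, $\tau H(\mathbf{x})\Delta\mathbf{x}+\Delta\mathbf{s}=-(\mathbf{s}+\tau g(\mathbf{x}))$. *)

theory Defs
  imports "HOL-Analysis.Analysis"
begin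

definition proper_cone :: "(real^'n) set \<Rightarrow> bool" where
  "proper_cone K \<longleftrightarrow> closed K \<and> convex K \<and> cone K \<and>
     K \<inter> uminus ` K = {0} \<and> interior K \<noteq> {}"

definition dual_cone :: "(real^'n) set \<Rightarrow> (real^'n) set" where
  "dual_cone K = {s. \<forall>x\<in>K. s \<bullet> x \<ge> 0}"

definition strictly_convex_on :: "(real^'n) set \<Rightarrow> (real^'n \<Rightarrow> real) \<Rightarrow> bool" where
  "strictly_convex_on S f \<longleftrightarrow>
     (\<forall>x\<in>S. \<forall>y\<in>S. x \<noteq> y \<longrightarrow> (\<forall>u::real. 0 < u \<and> u < 1 \<longrightarrow>
        f ((1 - u) *\<^sub>R x + u *\<^sub>R y) < (1 - u) * f x + u * f y))"

definition dual_local_norm :: "real^'n^'n \<Rightarrow> real^'n \<Rightarrow> real" where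
  "dual_local_norm Hx v = sqrt (v \<bullet> (matrix_inv Hx *v v))"

text \<open>Third derivative: \<open>D\<^sup>3f(x)[h,h,h] = h^T (DH(x)[h]) h\<close>.\<close>
definition LHSCB ::
  "(real^'n) set \<Rightarrow> (real^'n \<Rightarrow> real) \<Rightarrow> (real^'n \<Rightarrow> real^'n) \<Rightarrow> (real^'n \<Rightarrow> real^'n^'n)
     \<Rightarrow> real \<Rightarrow> bool" where
  "LHSCB K f g H \<nu> \<longleftrightarrow>
     strictly_convex_on (interior K) f \<and>
     (\<forall>x\<in>interior K.
        (f has_derivative (\<lambda>h. g x \<bullet> h)) (at x) \<and>
        (g has_derivative (\<lambda>h. H x *v h)) (at x) \<and>
        H differentiable (at x) \<and>
        invertible (H x) \<and>
        (\<forall>T h. (H has_derivative T) (at x) \<longrightarrow>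
            \<bar>h \<bullet> (T h *v h)\<bar> \<le> 2 * (h \<bullet> (H x *v h)) powr (3/2))) \<and>
     (\<forall>p\<in>frontier K. filterlim f at_top (at p within interior K)) \<and>
     bdd_above {g x \<bullet> (matrix_inv (H x) *v g x) | x. x \<in> interior K} \<and>
     \<nu> = Sup {g x \<bullet> (matrix_inv (H x) *v g x) | x. x \<in> interior K} \<and>
     (\<forall>x\<in>interior K. \<forall>t>0. f (t *\<^sub>R x) = f x - \<nu> * ln t)"

definition strictly_feasible ::
  "(real^'n) set \<Rightarrow> real^'n^'m \<Rightarrow> real^'m \<Rightarrow> real^'n \<Rightarrow> real^'n \<Rightarrow> real^'m \<Rightarrow> real^'n \<Rightarrow> bool" where
  "strictly_feasible K A b c x y s \<longleftrightarrow>
     x \<in> interior K \<and> s \<in> interior (dual_cone K) \<and> A *v x = b \<and> transpose A *v y + s = c"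

definition nbhd ::
  "(real^'n) set \<Rightarrow> (real^'n \<Rightarrow> real^'n) \<Rightarrow> (real^'n \<Rightarrow> real^'n^'n) \<Rightarrow>
     real^'n^'m \<Rightarrow> real^'m \<Rightarrow> real^'n \<Rightarrow> real \<Rightarrow> real \<Rightarrow> ((real^'n) \<times> (real^'m) \<times> (real^'n)) set" where
  "nbhd K g H A b c \<eta> \<tau> = {(x, y, s). strictly_feasible K A b c x y s \<and>
      dual_local_norm (H x) (s + \<tau> *\<^sub>R g x) \<le> \<eta> * \<tau>}"

end

theory Submission
  imports Defs
begin

(* Logarithmic homogeneity f(t x) = f x - nu ln t gives the Euler identities g(x).x = -nu and
   H(x) x = -g(x). Substituting the third Newton equation and using dx.ds = 0 (dx lies in the
   null space of A, ds in the range of A^T), the new duality gap becomes tau nu - tau ||dx||_x^2,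
   whence the upper bound. For the lower bound, s + tau g(x) = -(tau H(x) dx + ds) with dx
   orthogonal to ds, so its dual local norm is at least tau ||dx||_x and the neighbourhood
   condition forces ||dx||_x <= eta.
   Symmetry and positive semidefiniteness of H(x) are not part of the definition of an LHSCB.
   Positivity comes from monotonicity of the gradient of the convex f; symmetry from the second
   difference f(x + th + tk) - f(x + th) - f(x + tk) + f x, which is symmetric in h and k and,
   by the mean value theorem, equals t^2 (H(x) k).h + o(t^2). *)

lemma strictly_convex_on_above_tangent:
  fixes f :: "real^'n \<Rightarrow> real"
  assumes convex: "strictly_convex_on S f" and "x \<in> S" "y \<in> S"
    and deriv: "(f has_derivative (\<lambda>h. G \<bullet> h)) (at x)"
  shows "G \<bullet> (y - x) \<le> f y - f x"
proof (cases "x = y")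
  case True
  then show ?thesis by simp
next
  case False
  define \<phi> where "\<phi> u = f (x + u *\<^sub>R (y - x))" for u :: real
  have "((\<lambda>u. x + u *\<^sub>R (y - x)) has_derivative (\<lambda>u. u *\<^sub>R (y - x))) (at 0)"
    by (auto intro!: derivative_eq_intros)
  moreover have "(f has_derivative (\<lambda>h. G \<bullet> h)) (at (x + 0 *\<^sub>R (y - x)))"
    using deriv by simp
  ultimately have "(\<phi> has_real_derivative G \<bullet> (y - x)) (at 0)"
    unfolding \<phi>_def has_field_derivative_def
    by (rule has_derivative_compose[THEN has_derivative_eq_rhs]) (simp add: fun_eq_iff)
  then have "((\<lambda>u. (\<phi> u - \<phi> 0) / u) \<longlongrightarrow> G \<bullet> (y - x)) (at_right 0)"
    by (auto simp: DERIV_def filterlim_at_split)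
  moreover have "eventually (\<lambda>u. (\<phi> u - \<phi> 0) / u \<le> f y - f x) (at_right 0)"
    using eventually_at_right_real[OF zero_less_one]
  proof eventually_elim
    case (elim u)
    then have "\<phi> u < (1 - u) * f x + u * f y"
      using convex \<open>x \<in> S\<close> \<open>y \<in> S\<close> False
      unfolding strictly_convex_on_def \<phi>_def by (auto simp: algebra_simps)
    with elim show ?case by (simp add: \<phi>_def field_simps)
  qed
  ultimately show ?thesis
    by (rule tendsto_upperbound) simp
qed

lemma strictly_convex_on_gradient_derivative_nonneg:
  fixes f :: "real^'n \<Rightarrow> real"
  assumes convex: "strictly_convex_on S f" and "open S" "x \<in> S"
    and gradient: "\<forall>z\<in>S. (f has_derivative (\<lambda>v. g z \<bullet> v)) (at z)"
    and deriv: "(g has_derivative L) (at x)"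
  shows "0 \<le> L h \<bullet> h"
proof -
  define \<phi> where "\<phi> t = g (x + t *\<^sub>R h) \<bullet> h" for t :: real
  have "((\<lambda>t. x + t *\<^sub>R h) has_derivative (\<lambda>t. t *\<^sub>R h)) (at 0)"
    by (auto intro!: derivative_eq_intros)
  moreover have "(g has_derivative L) (at (x + 0 *\<^sub>R h))"
    using deriv by simp
  ultimately have "((\<lambda>t. g (x + t *\<^sub>R h)) has_derivative (\<lambda>t. L (t *\<^sub>R h))) (at 0)"
    by (rule has_derivative_compose)
  then have "(\<phi> has_real_derivative L h \<bullet> h) (at 0)"
    unfolding \<phi>_def has_field_derivative_def
    by (auto intro!: derivative_eq_intros simp: linear_cmul[OF has_derivative_linear[OF deriv]])
  then have "((\<lambda>t. (\<phi> t - \<phi> 0) / t) \<longlongrightarrow> L h \<bullet> h) (at_right 0)"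
    by (auto simp: DERIV_def filterlim_at_split)
  moreover have "((\<lambda>t. x + t *\<^sub>R h) \<longlongrightarrow> x) (at_right 0)"
    by (auto intro!: tendsto_eq_intros)
  then have "eventually (\<lambda>t. x + t *\<^sub>R h \<in> S) (at_right 0)"
    using \<open>open S\<close> \<open>x \<in> S\<close> by (rule topological_tendstoD)
  then have "eventually (\<lambda>t. 0 \<le> (\<phi> t - \<phi> 0) / t) (at_right 0)"
    using eventually_at_right_real[OF zero_less_one]
  proof eventually_elim
    case (elim t)
    have "g x \<bullet> (t *\<^sub>R h) \<le> f (x + t *\<^sub>R h) - f x"
      "g (x + t *\<^sub>R h) \<bullet> (- (t *\<^sub>R h)) \<le> f x - f (x + t *\<^sub>R h)"
      using strictly_convex_on_above_tangent[OF convex] gradient elim \<open>x \<in> S\<close> by force+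
    then have "0 \<le> t * (\<phi> t - \<phi> 0)"
      by (simp add: \<phi>_def right_diff_distrib)
    with elim show ?case
      by (simp add: zero_le_mult_iff)
  qed
  ultimately show ?thesis
    by (rule tendsto_lowerbound) simp
qed

lemma has_derivative_ball_approx:
  assumes "(g has_derivative L) (at x)" "open S" "x \<in> S" "0 < e"
  obtains d where "0 < d" "ball x d \<subseteq> S"
    "\<forall>v. norm v < d \<longrightarrow> norm (g (x + v) - g x - L v) \<le> e * norm v"
proof -
  from assms(1,4) obtain d0 where "0 < d0"
    and d0: "\<forall>y. norm (y - x) < d0 \<longrightarrow> norm (g y - g x - L (y - x)) \<le> e * norm (y - x)"
    unfolding has_derivative_at_alt by blast
  obtain r where "0 < r" "ball x r \<subseteq> S"
    using assms(2,3) openE by blast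
  show ?thesis
  proof
    show "0 < min d0 r" "ball x (min d0 r) \<subseteq> S"
      using \<open>0 < d0\<close> \<open>0 < r\<close> \<open>ball x r \<subseteq> S\<close> by auto
    show "\<forall>v. norm v < min d0 r \<longrightarrow> norm (g (x + v) - g x - L v) \<le> e * norm v"
      using d0 by (metis add_diff_cancel_left' min.strict_boundedE)
  qed
qed

lemma linear_approx_diff:
  assumes approx: "\<forall>v. norm v < d \<longrightarrow> norm (g (x + v) - g x - L v) \<le> e * norm v"
    and "linear L" "norm u < d" "norm w < d"
  shows "norm (g (x + u) - g (x + w) - L (u - w)) \<le> e * (norm u + norm w)"
proof -
  have "g (x + u) - g (x + w) - L (u - w) = (g (x + u) - g x - L u) - (g (x + w) - g x - L w)"
    using \<open>linear L\<close> by (simp add: linear_diff algebra_simps)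
  also have "norm \<dots> \<le> norm (g (x + u) - g x - L u) + norm (g (x + w) - g x - L w)"
    by (rule norm_triangle_ineq4)
  also have "\<dots> \<le> e * (norm u + norm w)"
    using approx \<open>norm u < d\<close> \<open>norm w < d\<close> by (simp add: distrib_left add_mono)
  finally show ?thesis .
qed

lemma second_difference_mvt:
  fixes f :: "'a::real_inner \<Rightarrow> real"
  assumes gradient: "\<forall>z\<in>S. (f has_derivative (\<lambda>v. g z \<bullet> v)) (at z)" and "0 < t"
    and segment: "\<And>a. 0 \<le> a \<Longrightarrow> a \<le> t \<Longrightarrow> x + a *\<^sub>R h \<in> S \<and> x + t *\<^sub>R k + a *\<^sub>R h \<in> S"
  shows "\<exists>a\<in>{0<..<t}. f (x + t *\<^sub>R h + t *\<^sub>R k) - f (x + t *\<^sub>R h) - f (x + t *\<^sub>R k) + f x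
           = t * ((g (x + t *\<^sub>R k + a *\<^sub>R h) - g (x + a *\<^sub>R h)) \<bullet> h)"
proof -
  define \<psi> where "\<psi> a = f (x + t *\<^sub>R k + a *\<^sub>R h) - f (x + a *\<^sub>R h)" for a
  have along: "((\<lambda>a. f (p + a *\<^sub>R h)) has_derivative (\<lambda>b. b * (g (p + a *\<^sub>R h) \<bullet> h)))
      (at a within {0..t})" if "p + a *\<^sub>R h \<in> S" for p a
  proof -
    have "((\<lambda>a. p + a *\<^sub>R h) has_derivative (\<lambda>b. b *\<^sub>R h)) (at a within {0..t})"
      by (auto intro!: derivative_eq_intros)
    moreover have "(f has_derivative (\<lambda>v. g (p + a *\<^sub>R h) \<bullet> v)) (at (p + a *\<^sub>R h))"
      using gradient that by blast
    ultimately show ?thesis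
      by (rule has_derivative_compose[THEN has_derivative_eq_rhs]) (simp add: fun_eq_iff)
  qed
  have "(\<psi> has_derivative (\<lambda>b. b * ((g (x + t *\<^sub>R k + a *\<^sub>R h) - g (x + a *\<^sub>R h)) \<bullet> h)))
          (at a within {0..t})" if "0 \<le> a" "a \<le> t" for a
    unfolding \<psi>_def using segment[OF that]
    by (auto intro!: has_derivative_diff[OF along along, THEN has_derivative_eq_rhs]
        simp: inner_diff_left right_diff_distrib)
  from mvt_simple[OF \<open>0 < t\<close> this] obtain a where "a \<in> {0<..<t}"
    "\<psi> t - \<psi> 0 = (t - 0) * ((g (x + t *\<^sub>R k + a *\<^sub>R h) - g (x + a *\<^sub>R h)) \<bullet> h)"
    by blast
  then show ?thesis
    by (intro bexI[of _ a]) (simp_all add: \<psi>_def algebra_simps)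
qed

lemma second_difference_estimate:
  fixes f :: "'a::real_inner \<Rightarrow> real"
  assumes gradient: "\<forall>z\<in>S. (f has_derivative (\<lambda>v. g z \<bullet> v)) (at z)"
    and "ball x d \<subseteq> S"
    and approx: "\<forall>v. norm v < d \<longrightarrow> norm (g (x + v) - g x - L v) \<le> e * norm v"
    and "linear L" "0 \<le> e" "0 < t" "t * (norm h + norm k) < d"
  shows "\<bar>f (x + t *\<^sub>R h + t *\<^sub>R k) - f (x + t *\<^sub>R h) - f (x + t *\<^sub>R k) + f x - t\<^sup>2 * (L k \<bullet> h)\<bar>
           \<le> t\<^sup>2 * (2 * e * (norm h + norm k) * norm h)"
proof -
  have near: "norm (a *\<^sub>R h) \<le> t * (norm h + norm k)" "norm (t *\<^sub>R k + a *\<^sub>R h) \<le> t * (norm h + norm k)"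
    if "0 \<le> a" "a \<le> t" for a
  proof -
    show "norm (a *\<^sub>R h) \<le> t * (norm h + norm k)"
      using that by (simp add: mult_mono add_increasing2)
    show "norm (t *\<^sub>R k + a *\<^sub>R h) \<le> t * (norm h + norm k)"
      using that norm_triangle_ineq[of "t *\<^sub>R k" "a *\<^sub>R h"] mult_right_mono[of a t "norm h"]
      by (simp add: distrib_left)
  qed
  with \<open>t * (norm h + norm k) < d\<close>
  have in_ball: "norm (a *\<^sub>R h) < d" "norm (t *\<^sub>R k + a *\<^sub>R h) < d" if "0 \<le> a" "a \<le> t" for a
    using that by fastforce+
  have "x + v \<in> S" if "norm v < d" for v
    using \<open>ball x d \<subseteq> S\<close> that
    by (metis add_diff_cancel_left' dist_norm mem_ball norm_minus_commute subsetD)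
  with in_ball have "x + a *\<^sub>R h \<in> S \<and> x + t *\<^sub>R k + a *\<^sub>R h \<in> S" if "0 \<le> a" "a \<le> t" for a
    using that by (simp add: add.assoc)
  from second_difference_mvt[OF gradient \<open>0 < t\<close> this]
  obtain a where a: "a \<in> {0<..<t}"
    and mvt: "f (x + t *\<^sub>R h + t *\<^sub>R k) - f (x + t *\<^sub>R h) - f (x + t *\<^sub>R k) + f x
               = t * ((g (x + t *\<^sub>R k + a *\<^sub>R h) - g (x + a *\<^sub>R h)) \<bullet> h)"
    by blast
  have "norm (g (x + (t *\<^sub>R k + a *\<^sub>R h)) - g (x + a *\<^sub>R h) - L (t *\<^sub>R k + a *\<^sub>R h - a *\<^sub>R h))
      \<le> e * (norm (t *\<^sub>R k + a *\<^sub>R h) + norm (a *\<^sub>R h))"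
    using a by (intro linear_approx_diff[OF approx \<open>linear L\<close>] in_ball) auto
  also have "\<dots> \<le> e * (2 * t * (norm h + norm k))"
    using near[of a] a \<open>0 \<le> e\<close> by (intro mult_left_mono) auto
  finally have "norm (g (x + t *\<^sub>R k + a *\<^sub>R h) - g (x + a *\<^sub>R h) - t *\<^sub>R L k)
      \<le> e * (2 * t * (norm h + norm k))"
    using \<open>linear L\<close> by (simp add: linear_scale add.assoc)
  then have "\<bar>(g (x + t *\<^sub>R k + a *\<^sub>R h) - g (x + a *\<^sub>R h) - t *\<^sub>R L k) \<bullet> h\<bar>
      \<le> e * (2 * t * (norm h + norm k)) * norm h"
    by (meson Cauchy_Schwarz_ineq2 mult_right_mono norm_ge_zero order_trans)
  then have "\<bar>t * ((g (x + t *\<^sub>R k + a *\<^sub>R h) - g (x + a *\<^sub>R h) - t *\<^sub>R L k) \<bullet> h)\<bar>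
      \<le> t * (e * (2 * t * (norm h + norm k)) * norm h)"
    using \<open>0 < t\<close> by (simp add: abs_mult)
  then show ?thesis
    unfolding mvt by (simp add: inner_diff_left power2_eq_square algebra_simps)
qed

lemma second_difference_quotient_tendsto:
  fixes f :: "'a::real_inner \<Rightarrow> real"
  assumes "open S" "x \<in> S"
    and gradient: "\<forall>z\<in>S. (f has_derivative (\<lambda>v. g z \<bullet> v)) (at z)"
    and deriv: "(g has_derivative L) (at x)"
  shows "((\<lambda>t. (f (x + t *\<^sub>R h + t *\<^sub>R k) - f (x + t *\<^sub>R h) - f (x + t *\<^sub>R k) + f x) / t\<^sup>2)
           \<longlongrightarrow> L k \<bullet> h) (at_right 0)"
proof (rule tendstoI)
  fix \<epsilon> :: real
  assume "0 < \<epsilon>"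
  define \<Delta> where "\<Delta> t = f (x + t *\<^sub>R h + t *\<^sub>R k) - f (x + t *\<^sub>R h) - f (x + t *\<^sub>R k) + f x" for t
  define C where "C = 2 * (norm h + norm k) * norm h"
  define e where "e = \<epsilon> / (C + 1)"
  have "0 \<le> C"
    by (simp add: C_def)
  then have "0 < e" "e * C < \<epsilon>"
    using \<open>0 < \<epsilon>\<close> by (simp_all add: e_def field_simps)
  obtain d where "0 < d" "ball x d \<subseteq> S"
    and approx: "\<forall>v. norm v < d \<longrightarrow> norm (g (x + v) - g x - L v) \<le> e * norm v"
    using has_derivative_ball_approx[OF deriv \<open>open S\<close> \<open>x \<in> S\<close> \<open>0 < e\<close>] .
  have "0 < norm h + norm k + 1"
    by (simp add: add_nonneg_pos)
  with \<open>0 < d\<close> have "0 < d / (norm h + norm k + 1)"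
    by simp
  from eventually_at_right_real[OF this]
  have "eventually (\<lambda>t. dist (\<Delta> t / t\<^sup>2) (L k \<bullet> h) < \<epsilon>) (at_right 0)"
  proof eventually_elim
    case (elim t)
    with \<open>0 < norm h + norm k + 1\<close> have t: "0 < t" "t * (norm h + norm k) < d"
      by (auto simp: pos_less_divide_eq distrib_left)
    from second_difference_estimate[OF gradient \<open>ball x d \<subseteq> S\<close> approx
        has_derivative_linear[OF deriv] _ t] \<open>0 < e\<close>
    have "\<bar>\<Delta> t - t\<^sup>2 * (L k \<bullet> h)\<bar> \<le> t\<^sup>2 * (e * C)"
      by (simp add: \<Delta>_def C_def ac_simps)
    moreover have "\<Delta> t / t\<^sup>2 - L k \<bullet> h = (\<Delta> t - t\<^sup>2 * (L k \<bullet> h)) / t\<^sup>2"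
      using \<open>0 < t\<close> by (simp add: diff_divide_distrib)
    ultimately have "dist (\<Delta> t / t\<^sup>2) (L k \<bullet> h) \<le> e * C"
      using \<open>0 < t\<close> by (simp add: dist_real_def abs_divide pos_divide_le_eq mult.commute)
    with \<open>e * C < \<epsilon>\<close> show ?case
      by linarith
  qed
  then show "eventually (\<lambda>t. dist ((f (x + t *\<^sub>R h + t *\<^sub>R k) - f (x + t *\<^sub>R h) - f (x + t *\<^sub>R k) + f x) / t\<^sup>2)
          (L k \<bullet> h) < \<epsilon>) (at_right 0)"
    by (simp add: \<Delta>_def)
qed

lemma gradient_derivative_symmetric:
  fixes f :: "'a::real_inner \<Rightarrow> real"
  assumes "open S" "x \<in> S"
    and "\<forall>z\<in>S. (f has_derivative (\<lambda>v. g z \<bullet> v)) (at z)"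
    and "(g has_derivative L) (at x)"
  shows "L k \<bullet> h = L h \<bullet> k"
proof -
  have swap: "f (x + t *\<^sub>R k + t *\<^sub>R h) - f (x + t *\<^sub>R k) - f (x + t *\<^sub>R h) + f x
      = f (x + t *\<^sub>R h + t *\<^sub>R k) - f (x + t *\<^sub>R h) - f (x + t *\<^sub>R k) + f x" for t
    by (simp add: algebra_simps)
  show ?thesis
    using second_difference_quotient_tendsto[OF assms, of h k]
      second_difference_quotient_tendsto[OF assms, of k h]
    unfolding swap by (rule tendsto_unique[OF trivial_limit_at_right_real])
qed

lemma log_homogeneous_gradient_inner_self:
  fixes f :: "'a::real_inner \<Rightarrow> real"
  assumes homogeneous: "\<forall>t>0. f (t *\<^sub>R x) = f x - \<nu> * ln t"
    and deriv: "(f has_derivative (\<lambda>h. G \<bullet> h)) (at x)"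
  shows "G \<bullet> x = - \<nu>"
proof -
  have "((\<lambda>t::real. t *\<^sub>R x) has_derivative (\<lambda>t. t *\<^sub>R x)) (at 1)"
    by (auto intro!: derivative_eq_intros)
  moreover have "(f has_derivative (\<lambda>h. G \<bullet> h)) (at (1 *\<^sub>R x))"
    using deriv by simp
  ultimately have "((\<lambda>t. f (t *\<^sub>R x)) has_real_derivative G \<bullet> x) (at 1)"
    unfolding has_field_derivative_def
    by (rule has_derivative_compose[THEN has_derivative_eq_rhs]) (simp add: fun_eq_iff)
  moreover have "((\<lambda>t. f x - \<nu> * ln t) has_real_derivative - \<nu>) (at 1)"
    by (auto intro!: derivative_eq_intros)
  then have "((\<lambda>t. f (t *\<^sub>R x)) has_real_derivative - \<nu>) (at 1)"
    by (rule has_field_derivative_transform_within_open[of _ _ _ "{0<..}"]) (use homogeneous in auto)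
  ultimately show ?thesis
    by (rule DERIV_unique)
qed

lemma inner_self_constant_derivative:
  fixes g :: "'a::real_inner \<Rightarrow> 'a"
  assumes "open S" "x \<in> S" "\<forall>z\<in>S. g z \<bullet> z = c"
    and deriv: "(g has_derivative L) (at x)"
  shows "L h \<bullet> x = - (g x \<bullet> h)"
proof -
  have "((\<lambda>z. g z \<bullet> z) has_derivative (\<lambda>h. L h \<bullet> x + g x \<bullet> h)) (at x)"
    using deriv by (auto intro!: derivative_eq_intros)
  moreover have "((\<lambda>z. g z \<bullet> z) has_derivative (\<lambda>h. 0)) (at x)"
    using assms by (intro has_derivative_transform_within_open[OF has_derivative_const, of S]) auto
  ultimately have "(\<lambda>h. L h \<bullet> x + g x \<bullet> h) = (\<lambda>h. 0)"
    by (rule has_derivative_unique)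
  then show ?thesis
    by (simp add: fun_eq_iff add_eq_0_iff)
qed

lemma null_space_orthogonal_transpose_range:
  fixes A :: "real^'n^'m"
  assumes "A *v u = 0" "transpose A *v y + v = 0"
  shows "u \<bullet> v = 0"
proof -
  have "v = - (y v* A)"
    using assms(2) by (simp add: eq_neg_iff_add_eq_0 add.commute)
  moreover have "(y v* A) \<bullet> u = 0"
    using assms(1) by (simp add: dot_lmul_matrix)
  ultimately show ?thesis
    by (simp add: inner_commute)
qed

lemma newton_step_inner:
  fixes M :: "real^'n^'n"
  assumes "G \<bullet> x = - \<nu>" "(M *v dx) \<bullet> x = - (G \<bullet> dx)" "dx \<bullet> ds = 0"
    and "\<tau> *\<^sub>R (M *v dx) + ds = - (s + \<tau> *\<^sub>R G)"
  shows "(x + dx) \<bullet> (s + ds) = \<tau> * \<nu> - \<tau> * ((M *v dx) \<bullet> dx)"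
proof -
  have ds: "ds = - s - \<tau> *\<^sub>R G - \<tau> *\<^sub>R (M *v dx)"
    using assms(4) by (simp add: algebra_simps)
  have "x \<bullet> ds = - (x \<bullet> s) + \<tau> * \<nu> + \<tau> * (G \<bullet> dx)"
    using assms(1,2) by (simp add: ds inner_diff_right inner_commute)
  moreover have "dx \<bullet> ds = - (dx \<bullet> s) - \<tau> * (G \<bullet> dx) - \<tau> * ((M *v dx) \<bullet> dx)"
    by (simp add: ds inner_diff_right inner_commute)
  ultimately show ?thesis
    using \<open>dx \<bullet> ds = 0\<close> by (simp add: inner_add)
qed

lemma matrix_inv_inverse:
  fixes M :: "real^'n^'n"
  assumes "invertible M"
  shows "M ** matrix_inv M = mat 1" "matrix_inv M ** M = mat 1"
  using someI_ex[OF assms[unfolded invertible_def]] unfolding matrix_inv_def by auto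

lemma quadratic_form_le_inverse_quadratic_form:
  fixes M :: "real^'n^'n"
  assumes "invertible M"
    and symmetric: "\<And>h k. (M *v k) \<bullet> h = (M *v h) \<bullet> k"
    and psd: "\<And>h. 0 \<le> (M *v h) \<bullet> h"
    and "u \<bullet> v = 0"
  shows "(M *v u) \<bullet> u \<le> (M *v u + v) \<bullet> (matrix_inv M *v (M *v u + v))"
proof -
  define w where "w = matrix_inv M *v v"
  have "M *v w = v"
    by (simp add: w_def matrix_vector_mul_assoc matrix_inv_inverse[OF assms(1)])
  then have "M *v u + v = M *v (u + w)"
    by (simp add: matrix_vector_right_distrib)
  then have "(M *v u + v) \<bullet> (matrix_inv M *v (M *v u + v)) = (M *v (u + w)) \<bullet> (u + w)"
    by (simp add: matrix_vector_mul_assoc matrix_inv_inverse[OF assms(1)])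
  also have "\<dots> = (M *v u) \<bullet> u + 2 * (u \<bullet> v) + (M *v w) \<bullet> w"
    using symmetric[of w u] \<open>M *v w = v\<close>
    by (simp add: matrix_vector_right_distrib inner_add inner_commute)
  finally show ?thesis
    using psd[of w] \<open>u \<bullet> v = 0\<close> by simp
qed

lemma newton_step_local_norm_le:
  fixes M :: "real^'n^'n"
  assumes "invertible M"
    and symmetric: "\<And>h k. (M *v k) \<bullet> h = (M *v h) \<bullet> k"
    and psd: "\<And>h. 0 \<le> (M *v h) \<bullet> h"
    and "dx \<bullet> ds = 0" "0 < \<tau>"
    and newton: "\<tau> *\<^sub>R (M *v dx) + ds = - r"
    and centred: "dual_local_norm M r \<le> \<eta> * \<tau>"
  shows "(M *v dx) \<bullet> dx \<le> \<eta>\<^sup>2"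
proof -
  have "\<tau>\<^sup>2 * ((M *v dx) \<bullet> dx) = (M *v (\<tau> *\<^sub>R dx)) \<bullet> (\<tau> *\<^sub>R dx)"
    by (simp add: matrix_vector_mult_scaleR power2_eq_square)
  also have "\<dots> \<le> (M *v (\<tau> *\<^sub>R dx) + ds) \<bullet> (matrix_inv M *v (M *v (\<tau> *\<^sub>R dx) + ds))"
    using \<open>dx \<bullet> ds = 0\<close>
    by (intro quadratic_form_le_inverse_quadratic_form[OF \<open>invertible M\<close> symmetric psd]) simp
  also have "\<dots> = r \<bullet> (matrix_inv M *v r)"
  proof -
    have "M *v (\<tau> *\<^sub>R dx) + ds = - r"
      using newton by (simp add: matrix_vector_mult_scaleR)
    moreover have "(- v) \<bullet> (matrix_inv M *v (- v)) = v \<bullet> (matrix_inv M *v v)" for v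
      by (simp add: linear_neg[OF matrix_vector_mul_linear])
    ultimately show ?thesis
      by metis
  qed
  also have "\<dots> \<le> (\<eta> * \<tau>)\<^sup>2"
    using centred unfolding dual_local_norm_def by (rule sqrt_le_D)
  finally show ?thesis
    using \<open>0 < \<tau>\<close> by (simp add: power_mult_distrib)
qed

lemma LHSCB_gradient_inner_self:
  assumes "LHSCB K f g H \<nu>" "x \<in> interior K"
  shows "g x \<bullet> x = - \<nu>"
  using assms unfolding LHSCB_def by (blast intro: log_homogeneous_gradient_inner_self)

lemma LHSCB_hessian_inner_self:
  assumes "LHSCB K f g H \<nu>" "x \<in> interior K"
  shows "(H x *v h) \<bullet> x = - (g x \<bullet> h)"
proof -
  have "\<forall>z\<in>interior K. g z \<bullet> z = - \<nu>"
    using assms(1) by (blast intro: LHSCB_gradient_inner_self)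
  moreover have "(g has_derivative (\<lambda>v. H x *v v)) (at x)"
    using assms unfolding LHSCB_def by blast
  ultimately show ?thesis
    by (rule inner_self_constant_derivative[OF open_interior \<open>x \<in> interior K\<close>])
qed

lemma LHSCB_hessian_symmetric:
  assumes "LHSCB K f g H \<nu>" "x \<in> interior K"
  shows "(H x *v k) \<bullet> h = (H x *v h) \<bullet> k"
  using assms unfolding LHSCB_def
  by (blast intro: gradient_derivative_symmetric[OF open_interior])

lemma LHSCB_hessian_nonneg:
  assumes "LHSCB K f g H \<nu>" "x \<in> interior K"
  shows "0 \<le> (H x *v h) \<bullet> h"
  using assms unfolding LHSCB_def
  by (blast intro: strictly_convex_on_gradient_derivative_nonneg[OF _ open_interior])

theorem lemma2p3:
  fixes K :: "(real^'n) set" and f :: "real^'n \<Rightarrow> real"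
    and g :: "real^'n \<Rightarrow> real^'n" and H :: "real^'n \<Rightarrow> real^'n^'n"
    and \<nu> \<eta> \<tau> :: real
    and A :: "real^'n^'m" and b :: "real^'m" and c :: "real^'n"
    and x s dx ds :: "real^'n" and y dy :: "real^'m"
  assumes "proper_cone K"
    and "LHSCB K f g H \<nu>"
    and "rank A = CARD('m)"
    and "\<eta> > 0" and "\<tau> > 0"
    and "(x, y, s) \<in> nbhd K g H A b c \<eta> \<tau>"
    and "A *v dx = 0"
    and "transpose A *v dy + ds = 0"
    and "\<tau> *\<^sub>R (H x *v dx) + ds = - (s + \<tau> *\<^sub>R g x)"
  shows "\<tau> * (\<nu> - \<eta>\<^sup>2) \<le> (x + dx) \<bullet> (s + ds) \<and> (x + dx) \<bullet> (s + ds) \<le> \<tau> * \<nu>"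
proof -
  have x: "x \<in> interior K" and centred: "dual_local_norm (H x) (s + \<tau> *\<^sub>R g x) \<le> \<eta> * \<tau>"
    using assms(6) by (auto simp: nbhd_def strictly_feasible_def)
  have "invertible (H x)"
    using assms(2) x unfolding LHSCB_def by blast
  have "dx \<bullet> ds = 0"
    using assms(7,8) by (rule null_space_orthogonal_transpose_range)
  have gap: "(x + dx) \<bullet> (s + ds) = \<tau> * \<nu> - \<tau> * ((H x *v dx) \<bullet> dx)"
    using LHSCB_gradient_inner_self[OF assms(2) x] LHSCB_hessian_inner_self[OF assms(2) x]
      \<open>dx \<bullet> ds = 0\<close> assms(9)
    by (rule newton_step_inner)
  have "(H x *v dx) \<bullet> dx \<le> \<eta>\<^sup>2"
    using \<open>invertible (H x)\<close> LHSCB_hessian_symmetric[OF assms(2) x]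
      LHSCB_hessian_nonneg[OF assms(2) x] \<open>dx \<bullet> ds = 0\<close> \<open>\<tau> > 0\<close> assms(9) centred
    by (rule newton_step_local_norm_le)
  with gap LHSCB_hessian_nonneg[OF assms(2) x, of dx] \<open>\<tau> > 0\<close> show ?thesis
    by (simp add: right_diff_distrib mult_left_mono)
qed

end
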